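(* Let $n,d\in\mathbb{N}$, $y_1,\dots,y_n\in\{-1,+1\}$, $z_1,\dots,z_n$ in a real Hilbert space $\mathcal{Z}$, $\tilde x_1,\dots,\tilde x_n\in\mathbb{R}^d$, $C>0$, $\gamma\ge0$, and let $(w^\star,b^\star,\tilde w^\star,\tilde b^\star,\alpha^\star,\beta^\star)$ be a primal-dual optimal point of the SVM+ problem with correcting vectors $\tilde z_i=\tilde x_i$ (Euclidean inner product). Let $h_i=[1-y_i(\langle w^\star,z_i\rangle+b^\star)]_+$ and suppose $$\frac{\sum_i(\alpha^\star_i+\beta^\star_i)h_i}{\sum_i(\alpha^\star_i+\beta^\star_i)}=\frac1n\sum_ih_i .$$ Then $\langle\tilde w^\star,\tilde x_i\rangle+\tilde b^\star=h_i$ for all $i=1,\dots,n$. Furthermore: (1) if $\gamma>0$, then $\tilde w^\star=0$ and $\tilde b^\star=h_i$ for all $i$ (so the loss $h_i$ is the same at all data points); (2) if $\gamma=0$, then $\tilde X\tilde\alpha^\star=0$, where $\tilde X=[\tilde x_1\cdots\tilde x_n]\in\mathbb{R}^{d\times n}$ and $\tilde\alpha^\star=\alpha^\star+\beta^\star-C\mathbf 1$; if additionally $\operatorname{rank}(\tilde X)=n$, then $\alpha^\star_i+\beta^\star_i=C$ for all $i$, every vector of $\mathbb{R}^n$ is of the form $(\langle\tilde w,\tilde x_i\rangle+\tilde b)_{i=1}^n$ for some $\tilde w\in\mathbb{R}^d,\tilde b\in\mathbb{R}$, and $(w^\star,b^\star,\xi^\star,\alpha^\star,\beta^\star)$ with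 $\xi^\star_i=\langle\tilde w^\star,\tilde x_i\rangle+\tilde b^\star$ is a primal-dual optimal point of the standard soft-margin SVM with parameter $C$.
   Context: SVM+ problem: $\min_{w\in\mathcal Z,b\in\mathbb R,\tilde w\in\mathbb R^d,\tilde b\in\mathbb R}\frac12(\|w\|^2+\gamma\|\tilde w\|^2)+C\sum_i(\langle\tilde w,\tilde x_i\rangle+\tilde b)$ subject to $y_i(\langle w,z_i\rangle+b)\ge1-(\langle\tilde w,\tilde x_i\rangle+\tilde b)$ and $\langle\tilde w,\tilde x_i\rangle+\tilde b\ge0$; primal-dual optimal points satisfy the KKT conditions $w=\sum_i\alpha_iy_iz_i$, $\sum_i\alpha_iy_i=0$, $\sum_i(\alpha_i+\beta_i-C)\tilde x_i=\gamma\tilde w$, $\sum_i(\alpha_i+\beta_i-C)=0$, $\alpha_i[\langle\tilde w,\tilde x_i\rangle+\tilde b-1+y_i(\langle w,z_i\rangle+b)]=0$, $\beta_i[\langle\tilde w,\tilde x_i\rangle+\tilde b]=0$, primal feasibility, $\alpha,\beta\ge0$. The standard soft-margin SVM with parameter $C$ is $\min_{w,b,\xi}\frac12\|w\|^2+C\sum_i\xi_i$ subject to $y_i(\langle w,z_i\rangle+b)\ge1-\xi_i$, $\xi_i\ge0$; its primal-dual optimal points $(w,b,\xi,\alpha,\beta)$ satisfy $w=\sum_i\alpha_iy_iz_i$, $\sum_i\alpha_iy_i=0$, $\alpha_i+\beta_i=C$, $\alpha_i[\xi_i-1+y_i(\langle w,z_i\rangle+b)]=0$, $\beta_i\xi_i=0$,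 primal feasibility, $\alpha,\beta\ge0$. $\mathbf 1$ is the all-ones vector. *)

theory Defs
  imports "HOL-Analysis.Analysis"
begin

text \<open>Primal-dual optimal points of the SVM+ problem (correcting vectors xt i in R^d,
  Euclidean inner product), characterised by the KKT system given in the paper.
  Data are indexed by a finite type 'n (so n = CARD('n)).\<close>

definition svmplus_pd_optimal ::
  "real \<Rightarrow> real \<Rightarrow> ('n::finite \<Rightarrow> real) \<Rightarrow> ('n \<Rightarrow> 'z::real_inner) \<Rightarrow> ('n \<Rightarrow> real^'d)
   \<Rightarrow> 'z \<Rightarrow> real \<Rightarrow> real^'d \<Rightarrow> real \<Rightarrow> ('n \<Rightarrow> real) \<Rightarrow> ('n \<Rightarrow> real) \<Rightarrow> bool" where
  "svmplus_pd_optimal C \<gamma> y z xt w b wt bt \<alpha> \<beta> \<longleftrightarrow>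
     w = (\<Sum>i\<in>UNIV. (\<alpha> i * y i) *\<^sub>R z i) \<and>
     (\<Sum>i\<in>UNIV. \<alpha> i * y i) = 0 \<and>
     (\<Sum>i\<in>UNIV. (\<alpha> i + \<beta> i - C) *\<^sub>R xt i) = \<gamma> *\<^sub>R wt \<and>
     (\<Sum>i\<in>UNIV. \<alpha> i + \<beta> i - C) = 0 \<and>
     (\<forall>i. \<alpha> i * (wt \<bullet> xt i + bt - 1 + y i * (w \<bullet> z i + b)) = 0) \<and>
     (\<forall>i. \<beta> i * (wt \<bullet> xt i + bt) = 0) \<and>
     (\<forall>i. y i * (w \<bullet> z i + b) \<ge> 1 - (wt \<bullet> xt i + bt)) \<and>
     (\<forall>i. wt \<bullet> xt i + bt \<ge> 0) \<and>
     (\<forall>i. \<alpha> i \<ge> 0 \<and> \<beta> i \<ge> 0)"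

definition svm_pd_optimal ::
  "real \<Rightarrow> ('n::finite \<Rightarrow> real) \<Rightarrow> ('n \<Rightarrow> 'z::real_inner)
   \<Rightarrow> 'z \<Rightarrow> real \<Rightarrow> ('n \<Rightarrow> real) \<Rightarrow> ('n \<Rightarrow> real) \<Rightarrow> ('n \<Rightarrow> real) \<Rightarrow> bool" where
  "svm_pd_optimal C y z w b \<xi> \<alpha> \<beta> \<longleftrightarrow>
     w = (\<Sum>i\<in>UNIV. (\<alpha> i * y i) *\<^sub>R z i) \<and>
     (\<Sum>i\<in>UNIV. \<alpha> i * y i) = 0 \<and>
     (\<forall>i. \<alpha> i + \<beta> i = C) \<and>
     (\<forall>i. \<alpha> i * (\<xi> i - 1 + y i * (w \<bullet> z i + b)) = 0) \<and>
     (\<forall>i. \<beta> i * \<xi> i = 0) \<and>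
     (\<forall>i. y i * (w \<bullet> z i + b) \<ge> 1 - \<xi> i) \<and>
     (\<forall>i. \<xi> i \<ge> 0) \<and>
     (\<forall>i. \<alpha> i \<ge> 0 \<and> \<beta> i \<ge> 0)"

definition corr_matrix :: "('n::finite \<Rightarrow> real^'d::finite) \<Rightarrow> real^'n^'d" where
  "corr_matrix xt = (\<chi> k i. xt i $ k)"

end

theory Submission
  imports Defs
begin

text \<open>Write \<open>\<xi>\<^sub>i = \<langle>w\<tilde>, x\<tilde>\<^sub>i\<rangle> + b\<tilde>\<close> for the slacks and \<open>s\<^sub>i = \<alpha>\<^sub>i + \<beta>\<^sub>i\<close>.
  Primal feasibility gives \<open>\<xi>\<^sub>i \<ge> h\<^sub>i\<close>, complementary slackness gives \<open>s\<^sub>i \<xi>\<^sub>i = s\<^sub>i h\<^sub>i\<close>,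
  and pairing the stationarity condition with \<open>(w\<tilde>, b\<tilde>)\<close> gives
  \<open>\<Sum> (s\<^sub>i - C) \<xi>\<^sub>i = \<gamma> \<parallel>w\<tilde>\<parallel>\<^sup>2\<close>. Since \<open>\<Sum> s\<^sub>i = n C\<close>, the averaging hypothesis says
  \<open>\<Sum> s\<^sub>i h\<^sub>i = C \<Sum> h\<^sub>i\<close>, and together these yield
  \<open>C \<Sum> (\<xi>\<^sub>i - h\<^sub>i) + \<gamma> \<parallel>w\<tilde>\<parallel>\<^sup>2 = 0\<close>, a sum of nonnegative terms. Hence \<open>\<xi> = h\<close> and
  \<open>\<gamma> \<parallel>w\<tilde>\<parallel>\<^sup>2 = 0\<close>. For \<open>\<gamma> = 0\<close> stationarity reads \<open>X\<tilde> (s - C\<one>) = 0\<close>, so full column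
  rank forces \<open>s = C\<one>\<close>, which turns the SVM+ KKT system into that of the soft-margin SVM.\<close>

lemma svmplus_hinge_le_slack:
  assumes "svmplus_pd_optimal C \<gamma> y z xt w b wt bt \<alpha> \<beta>"
  shows "max 0 (1 - y i * (w \<bullet> z i + b)) \<le> wt \<bullet> xt i + bt"
  using assms unfolding svmplus_pd_optimal_def by (metis max.boundedI diff_le_eq add.commute)

lemma svmplus_complementary_slackness_hinge:
  assumes opt: "svmplus_pd_optimal C \<gamma> y z xt w b wt bt \<alpha> \<beta>"
  shows "(\<alpha> i + \<beta> i) * (wt \<bullet> xt i + bt) = (\<alpha> i + \<beta> i) * max 0 (1 - y i * (w \<bullet> z i + b))"
proof -
  let ?\<xi> = "wt \<bullet> xt i + bt" and ?h = "max 0 (1 - y i * (w \<bullet> z i + b))"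
  have \<alpha>: "\<alpha> i * (?\<xi> - 1 + y i * (w \<bullet> z i + b)) = 0" and \<beta>: "\<beta> i * ?\<xi> = 0"
    and \<xi>_nonneg: "?\<xi> \<ge> 0"
    using opt unfolding svmplus_pd_optimal_def by blast+
  have "\<alpha> i * ?\<xi> = \<alpha> i * ?h"
  proof (cases "\<alpha> i = 0")
    case False
    with \<alpha> have "?\<xi> = 1 - y i * (w \<bullet> z i + b)" by simp
    with \<xi>_nonneg show ?thesis by simp
  qed simp
  moreover have "\<beta> i * ?\<xi> = \<beta> i * ?h"
  proof (cases "\<beta> i = 0")
    case False
    with \<beta> have "?\<xi> = 0" by simp
    with svmplus_hinge_le_slack[OF opt, of i] show ?thesis by simp
  qed simp
  ultimately show ?thesis by (metis distrib_right)
qed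

lemma svmplus_dual_weight_sum:
  fixes \<alpha> \<beta> :: "'n::finite \<Rightarrow> real"
  assumes "svmplus_pd_optimal C \<gamma> y z xt w b wt bt \<alpha> \<beta>"
  shows "(\<Sum>i\<in>UNIV. \<alpha> i + \<beta> i) = real CARD('n) * C"
  using assms unfolding svmplus_pd_optimal_def by (simp add: sum_subtractf)

lemma svmplus_stationarity_slack_sum:
  assumes "svmplus_pd_optimal C \<gamma> y z xt w b wt bt \<alpha> \<beta>"
  shows "(\<Sum>i\<in>UNIV. (\<alpha> i + \<beta> i - C) * (wt \<bullet> xt i + bt)) = \<gamma> * (wt \<bullet> wt)"
proof -
  have "(\<Sum>i\<in>UNIV. (\<alpha> i + \<beta> i - C) * (wt \<bullet> xt i + bt))
      = (\<Sum>i\<in>UNIV. (\<alpha> i + \<beta> i - C) * (wt \<bullet> xt i)) + bt * (\<Sum>i\<in>UNIV. \<alpha> i + \<beta> i - C)"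
    unfolding sum_distrib_left sum.distrib[symmetric] by (rule sum.cong) (simp_all add: algebra_simps)
  also have "\<dots> = wt \<bullet> (\<Sum>i\<in>UNIV. (\<alpha> i + \<beta> i - C) *\<^sub>R xt i) + bt * (\<Sum>i\<in>UNIV. \<alpha> i + \<beta> i - C)"
    by (simp add: inner_sum_right)
  also have "\<dots> = \<gamma> * (wt \<bullet> wt)"
    using assms unfolding svmplus_pd_optimal_def by simp
  finally show ?thesis .
qed

lemma svmplus_slack_eq_hinge:
  fixes \<alpha> \<beta> :: "'n::finite \<Rightarrow> real"
  assumes opt: "svmplus_pd_optimal C \<gamma> y z xt w b wt bt \<alpha> \<beta>"
    and C: "C > 0" and \<gamma>: "\<gamma> \<ge> 0"
    and weighted: "(\<Sum>i\<in>UNIV. (\<alpha> i + \<beta> i) * max 0 (1 - y i * (w \<bullet> z i + b)))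
                   = C * (\<Sum>i\<in>UNIV. max 0 (1 - y i * (w \<bullet> z i + b)))"
  shows "(\<forall>i. wt \<bullet> xt i + bt = max 0 (1 - y i * (w \<bullet> z i + b))) \<and> \<gamma> * (wt \<bullet> wt) = 0"
proof -
  define \<xi> where "\<xi> i = wt \<bullet> xt i + bt" for i
  define h where "h i = max 0 (1 - y i * (w \<bullet> z i + b))" for i
  have h_le_\<xi>: "h i \<le> \<xi> i" for i
    unfolding h_def \<xi>_def by (rule svmplus_hinge_le_slack[OF opt])
  have "(\<Sum>i\<in>UNIV. (\<alpha> i + \<beta> i) * \<xi> i) = C * (\<Sum>i\<in>UNIV. \<xi> i) + \<gamma> * (wt \<bullet> wt)"
    using svmplus_stationarity_slack_sum[OF opt]
    by (simp add: \<xi>_def algebra_simps sum_subtractf sum_distrib_left)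
  moreover have "(\<Sum>i\<in>UNIV. (\<alpha> i + \<beta> i) * \<xi> i) = C * (\<Sum>i\<in>UNIV. h i)"
    using svmplus_complementary_slackness_hinge[OF opt] weighted
    unfolding \<xi>_def h_def by (metis (no_types, lifting) sum.cong)
  ultimately have balance: "C * (\<Sum>i\<in>UNIV. \<xi> i - h i) + \<gamma> * (wt \<bullet> wt) = 0"
    by (simp add: sum_subtractf algebra_simps)
  have "0 \<le> C * (\<Sum>i\<in>UNIV. \<xi> i - h i)"
    using C h_le_\<xi> by (simp add: sum_nonneg)
  moreover have "0 \<le> \<gamma> * (wt \<bullet> wt)" using \<gamma> by simp
  ultimately have "(\<Sum>i\<in>UNIV. \<xi> i - h i) = 0" and "\<gamma> * (wt \<bullet> wt) = 0"
    using balance C by (simp_all add: add_nonneg_eq_0_iff)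
  then show ?thesis
    using h_le_\<xi> sum_nonneg_eq_0_iff[of UNIV "\<lambda>i. \<xi> i - h i"] by (simp add: \<xi>_def h_def)
qed

lemma corr_matrix_mult_vec:
  "corr_matrix xt *v c = (\<Sum>i\<in>UNIV. (c $ i) *\<^sub>R xt i)"
  by (simp add: vec_eq_iff matrix_vector_mult_def corr_matrix_def sum_component mult.commute)

lemma transpose_corr_matrix_mult_vec:
  "transpose (corr_matrix xt) *v u = (\<chi> i. u \<bullet> xt i)"
  by (simp add: vec_eq_iff matrix_vector_mult_def transpose_def corr_matrix_def inner_vec_def
      mult.commute)

lemma full_rank_corr_matrix_affine_surj:
  fixes xt :: "'n::finite \<Rightarrow> real^'d::finite"
  assumes "rank (corr_matrix xt) = CARD('n)"
  shows "\<exists>wt bt. \<forall>i. v $ i = wt \<bullet> xt i + bt"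
proof -
  have "rank (transpose (corr_matrix xt)) = CARD('n)"
    using assms by (simp add: rank_transpose)
  then have "surj ((*v) (transpose (corr_matrix xt)))"
    using full_rank_surjective by blast
  then obtain u where "v = transpose (corr_matrix xt) *v u" by blast
  then have "v = (\<chi> i. u \<bullet> xt i)" by (simp only: transpose_corr_matrix_mult_vec)
  then have "\<forall>i. v $ i = u \<bullet> xt i + 0" by simp
  then show ?thesis by blast
qed

lemma svmplus_pd_optimal_imp_svm_pd_optimal:
  assumes "svmplus_pd_optimal C \<gamma> y z xt w b wt bt \<alpha> \<beta>" and "\<forall>i. \<alpha> i + \<beta> i = C"
  shows "svm_pd_optimal C y z w b (\<lambda>i. wt \<bullet> xt i + bt) \<alpha> \<beta>"
  using assms unfolding svmplus_pd_optimal_def svm_pd_optimal_def by auto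

theorem proposition4:
  fixes C \<gamma> :: real
    and y :: "'n::finite \<Rightarrow> real"
    and z :: "'n \<Rightarrow> 'z::{real_inner,complete_space}"
    and xt :: "'n \<Rightarrow> real^'d::finite"
    and w :: 'z and b :: real and wt :: "real^'d" and bt :: real
    and \<alpha> \<beta> :: "'n \<Rightarrow> real"
    and h :: "'n \<Rightarrow> real"
  assumes y: "\<forall>i. y i \<in> {-1, 1}"
    and C: "C > 0" and \<gamma>: "\<gamma> \<ge> 0"
    and opt: "svmplus_pd_optimal C \<gamma> y z xt w b wt bt \<alpha> \<beta>"
    and h_def: "\<forall>i. h i = max 0 (1 - y i * (w \<bullet> z i + b))"
    and avg: "(\<Sum>i\<in>UNIV. (\<alpha> i + \<beta> i) * h i) / (\<Sum>i\<in>UNIV. \<alpha> i + \<beta> i)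
              = (1 / real CARD('n)) * (\<Sum>i\<in>UNIV. h i)"
  shows "(\<forall>i. wt \<bullet> xt i + bt = h i)
     \<and> (\<gamma> > 0 \<longrightarrow> wt = 0 \<and> (\<forall>i. bt = h i))
     \<and> (\<gamma> = 0 \<longrightarrow>
          corr_matrix xt *v (\<chi> i. \<alpha> i + \<beta> i - C) = 0
          \<and> (rank (corr_matrix xt) = CARD('n) \<longrightarrow>
               (\<forall>i. \<alpha> i + \<beta> i = C)
               \<and> (\<forall>v :: real^'n. \<exists>wt' :: real^'d. \<exists>bt' :: real. \<forall>i. v $ i = wt' \<bullet> xt i + bt')
               \<and> svm_pd_optimal C y z w b (\<lambda>i. wt \<bullet> xt i + bt) \<alpha> \<beta>))"
proof -
  have h_eq: "h = (\<lambda>i. max 0 (1 - y i * (w \<bullet> z i + b)))" using h_def by auto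
  have "(\<Sum>i\<in>UNIV. (\<alpha> i + \<beta> i) * h i) = C * (\<Sum>i\<in>UNIV. h i)"
    using avg C svmplus_dual_weight_sum[OF opt] by (simp add: field_simps)
  then have slack: "\<forall>i. wt \<bullet> xt i + bt = h i" and "\<gamma> * (wt \<bullet> wt) = 0"
    using svmplus_slack_eq_hinge[OF opt C \<gamma>] unfolding h_eq by blast+
  then have "\<gamma> > 0 \<longrightarrow> wt = 0" by auto
  moreover have "corr_matrix xt *v (\<chi> i. \<alpha> i + \<beta> i - C) = 0" if "\<gamma> = 0"
    using opt that unfolding svmplus_pd_optimal_def by (simp add: corr_matrix_mult_vec)
  moreover have "\<forall>i. \<alpha> i + \<beta> i = C"
    if "corr_matrix xt *v (\<chi> i. \<alpha> i + \<beta> i - C) = 0" and "rank (corr_matrix xt) = CARD('n)"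
  proof -
    have "inj ((*v) (corr_matrix xt))" using that(2) full_rank_injective by blast
    then have "(\<chi> i. \<alpha> i + \<beta> i - C) = 0"
      using that(1) by (metis injD matrix_vector_mult_0_right)
    then show ?thesis by (simp add: vec_eq_iff)
  qed
  ultimately show ?thesis
    using slack full_rank_corr_matrix_affine_surj svmplus_pd_optimal_imp_svm_pd_optimal[OF opt]
    by auto
qed

end
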